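(* Let $p,q\in\mathbb Z$, $2\le n\le\infty$, $r\ge0$ and let $A$ be an $n$-multicomplex. Let $\phi_r\colon C_r\otimes A\to A$ be the morphism $\varepsilon\otimes 1_A$ (followed by the identification $R^{0,0}\otimes A\cong A$). Then $ZW_k^{p,q}(\phi_r)\colon ZW_k^{p,q}(C_r\otimes A)\to ZW_k^{p,q}(A)$ is surjective for every $0\le k\le r$.
   Context: Throughout, $R$ is a commutative unital ring. For $1\le n\le\infty$, an $n$-multicomplex is a $\mathbb Z\times\mathbb Z$-bigraded $R$-module $A=\{A^{p,q}\}$ with $R$-linear maps $d_i\colon A\to A$ ($i\ge0$) of bidegree $(-i,1-i)$ such that $\sum_{i+j=l}(-1)^id_id_j=0$ for all $l\ge0$, and $d_i=0$ for all $i\ge n$. A $2$-multicomplex is a bicomplex; any $n$-multicomplex is regarded as an $l$-multicomplex for $l\ge n$. Tensor product: $(A\otimes B)^{p,q}=\bigoplus_{p_1+p_2=p,\,q_1+q_2=q}A^{p_1,q_1}\otimes_RB^{p_2,q_2}$ with $d_i(a\otimes b)=d_ia\otimes b+(-1)^{\langle(-i,1-i),(a_1,a_2)\rangle}a\otimes d_ib$ for $a$ of bidegree $(a_1,a_2)$, where $\langle(x_1,x_2),(y_1,y_2)\rangle=x_1y_1+x_2y_2$. $C_r$ is the bicomplex $\mathcal ZW^2_r(0,0)$: for $r=0$ it is the free bicomplex on one generator $a_0$ in bidegree $(0,0)$ (free $R$-module on $a_0,d_0a_0,d_1a_0,d_0d_1a_0$); for $r\ge1$ it is the free $R$-module with basis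 $\beta_{-k,-k}$, $\beta_{-k-1,-k}$ ($0\le k\le r-1$; $\beta_{u,v}$ in bidegree $(u,v)$), with $d_1\beta_{-k,-k}=\beta_{-k-1,-k}$ for $0\le k\le r-1$, $d_0\beta_{-k,-k}=\beta_{-k,-k+1}$ for $1\le k\le r-1$, and all other structure maps zero. $\varepsilon\colon C_r\to R^{0,0}$ (where $R^{0,0}$ is $R$ in bidegree $(0,0)$ with zero structure maps) is the bicomplex morphism sending $a_0$ (resp. $\beta_{0,0}$ when $r\ge1$) to $1$ and all other basis elements to $0$. Witness cycles: $ZW_0^{p,q}(A)=A^{p,q}$; for $k\ge1$, $ZW_k^{p,q}(A)$ is the $R$-module of tuples $(a_0,\dots,a_{k-1})$ with $a_i\in A^{p-i,q-i}$ and $\sum_{i+j=l}(-1)^id_ia_j=0$ for $0\le l\le k-1$; a morphism $f$ induces $ZW_k(f)(a_0,\dots,a_{k-1})=(f(a_0),\dots,f(a_{k-1}))$. *)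

theory Defs
  imports Main "HOL-Library.Function_Algebras" "HOL-Library.Extended_Nat"
begin

(* Representation of a bigraded R-module with structure maps:
   a family of submodules  Car p q  of an ambient R-module  'a  (scalar mult. scale),
   and maps  d i p q : Car p q -> Car (p-i) (q+1-i)  (the component of d_i on A^{p,q}). *)

definition sgnpow :: "nat \<Rightarrow> 'a::ab_group_add \<Rightarrow> 'a" where
  "sgnpow i x = (if even i then x else - x)"

definition isgn :: "int \<Rightarrow> 'a::ab_group_add \<Rightarrow> 'a" where
  "isgn e x = (if even e then x else - x)"

definition multicomplex ::
  "enat \<Rightarrow> ('r::comm_ring_1 \<Rightarrow> 'a::ab_group_add \<Rightarrow> 'a) \<Rightarrow> (int \<Rightarrow> int \<Rightarrow> 'a set)
     \<Rightarrow> (nat \<Rightarrow> int \<Rightarrow> int \<Rightarrow> 'a \<Rightarrow> 'a) \<Rightarrow> bool" where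
  "multicomplex n scale Car d \<longleftrightarrow>
     module scale
   \<and> (\<forall>p q. module.subspace scale (Car p q))
   \<and> (\<forall>i p q. \<forall>x\<in>Car p q. d i p q x \<in> Car (p - int i) (q + 1 - int i))
   \<and> (\<forall>i p q. \<forall>x\<in>Car p q. \<forall>y\<in>Car p q. d i p q (x + y) = d i p q x + d i p q y)
   \<and> (\<forall>i p q c. \<forall>x\<in>Car p q. d i p q (scale c x) = scale c (d i p q x))
   \<and> (\<forall>l p q. \<forall>x\<in>Car p q.
        (\<Sum>i\<le>l. sgnpow i (d i (p - int (l - i)) (q + 1 - int (l - i)) (d (l - i) p q x))) = 0)
   \<and> (\<forall>i p q. n \<le> enat i \<longrightarrow> (\<forall>x\<in>Car p q. d i p q x = 0))"

(* Witness cycles ZW_k^{p,q}; tuples (a_0,...,a_{k-1}) are lists of length k.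
   ZW_0^{p,q} = A^{p,q} is encoded as singleton lists [a], a \<in> A^{p,q}. *)
definition ZW :: "(int \<Rightarrow> int \<Rightarrow> 'a set) \<Rightarrow> (nat \<Rightarrow> int \<Rightarrow> int \<Rightarrow> 'a \<Rightarrow> 'a)
                    \<Rightarrow> nat \<Rightarrow> int \<Rightarrow> int \<Rightarrow> 'a::ab_group_add list set" where
  "ZW Car d k p q =
    (if k = 0 then {[a] | a. a \<in> Car p q}
     else {as. length as = k
             \<and> (\<forall>i<k. as ! i \<in> Car (p - int i) (q - int i))
             \<and> (\<forall>l<k. (\<Sum>i\<le>l. sgnpow i (d i (p - int (l - i)) (q - int (l - i)) (as ! (l - i)))) = 0)})"

(* The bicomplex C_r = ZW^2_r(0,0): a free R-module on a finite basis; every basis element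
   has a distinct bidegree, so basis elements are labelled by their bidegree (u,v).
   r = 0: a_0 ~ (0,0), d_0 a_0 ~ (0,1), d_1 a_0 ~ (-1,0), d_0 d_1 a_0 = d_1 d_0 a_0 ~ (-1,1).
   r >= 1: beta_{-k,-k} ~ (-k,-k), beta_{-k-1,-k} ~ (-k-1,-k), 0 <= k <= r-1. *)
definition Cbasis :: "nat \<Rightarrow> (int \<times> int) set" where
  "Cbasis r = (if r = 0 then {(0,0), (0,1), (-1,0), (-1,1)}
               else {(- int k, - int k) | k. k < r} \<union> {(- int k - 1, - int k) | k. k < r})"

(* structure maps of C_r on basis elements: d_i b = c (coefficient 1) or d_i b = 0 (None) *)
definition Cd :: "nat \<Rightarrow> nat \<Rightarrow> int \<times> int \<Rightarrow> (int \<times> int) option" where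
  "Cd r i b =
    (if r = 0 then
       (if i = 0 \<and> b = (0,0) then Some (0,1)
        else if i = 0 \<and> b = (-1,0) then Some (-1,1)
        else if i = 1 \<and> b = (0,0) then Some (-1,0)
        else if i = 1 \<and> b = (0,1) then Some (-1,1)
        else None)
     else
       (if i = 1 \<and> (\<exists>k<r. b = (- int k, - int k)) then Some (fst b - 1, snd b)
        else if i = 0 \<and> (\<exists>k. 1 \<le> k \<and> k < r \<and> b = (- int k, - int k)) then Some (fst b, snd b + 1)
        else None))"

(* Tensor product C_r \<otimes> A: since C_r is free on Cbasis r,
   (C_r \<otimes> A)^{p,q} = \<Oplus>_{b} b \<otimes> A^{p-b_1,q-b_2}; an element is a function f with
   f b \<in> A^{p-b_1,q-b_2} (the coefficient of b), supported on the basis. *)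
definition TCar :: "nat \<Rightarrow> (int \<Rightarrow> int \<Rightarrow> 'a::ab_group_add set) \<Rightarrow> int \<Rightarrow> int \<Rightarrow> (int \<times> int \<Rightarrow> 'a) set" where
  "TCar r Car p q = {f. (\<forall>b\<in>Cbasis r. f b \<in> Car (p - fst b) (q - snd b))
                        \<and> (\<forall>b. b \<notin> Cbasis r \<longrightarrow> f b = 0)}"

(* d_i (b \<otimes> a) = d_i b \<otimes> a + (-1)^<(-i,1-i),deg b> b \<otimes> d_i a *)
definition Td :: "nat \<Rightarrow> (nat \<Rightarrow> int \<Rightarrow> int \<Rightarrow> 'a \<Rightarrow> 'a) \<Rightarrow> nat \<Rightarrow> int \<Rightarrow> int
                    \<Rightarrow> (int \<times> int \<Rightarrow> 'a::ab_group_add) \<Rightarrow> (int \<times> int \<Rightarrow> 'a)" where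
  "Td r d i p q f = (\<lambda>c. if c \<in> Cbasis r then
        (\<Sum>b\<in>{b\<in>Cbasis r. Cd r i b = Some c}. f b)
        + isgn ((- int i) * fst c + (1 - int i) * snd c) (d i (p - fst c) (q - snd c) (f c))
      else 0)"

(* phi_r = (epsilon \<otimes> 1_A) followed by R^{0,0} \<otimes> A \<cong> A: keeps the coefficient of the
   generator (a_0, resp. beta_{0,0}), whose label is (0,0). *)
definition phi :: "(int \<times> int \<Rightarrow> 'a) \<Rightarrow> 'a" where
  "phi f = f (0,0)"

end

theory Submission imports Defs begin

text \<open>A witness cycle (a_0, ..., a_{k-1}) of A lifts to the tuple with entries
  x_j = \<Sum>_{m \<le> j} \<beta>_{-m,-m} \<otimes> a_{j-m}, whose \<beta>_{0,0}-coefficient is a_j.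
  In the coefficient of \<beta>_{-m,-m}, the l-th witness equation of the lift is (-1)^m times
  the (l-m)-th witness equation of a. In the coefficient of \<beta>_{-m-1,-m}, the contributions
  d_1 \<beta>_{-m,-m} \<otimes> a_{l-1-m} and d_0 \<beta>_{-m-1,-m-1} \<otimes> a_{l-1-m} cancel; the second
  exists in C_r because l < k \<le> r.\<close>

lemma sum_apply: "(\<Sum>i\<in>S. f i) x = (\<Sum>i\<in>S. f i x)"
  by (induction S rule: infinite_finite_induct) auto

lemma sgnpow_apply: "sgnpow i f x = sgnpow i (f x)"
  by (simp add: sgnpow_def)

lemma sgnpow_zero [simp]: "sgnpow i (0::'a::ab_group_add) = 0"
  by (simp add: sgnpow_def)

lemma isgn_zero [simp]: "isgn e (0::'a::ab_group_add) = 0"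
  by (simp add: isgn_def)

lemma sgnpow_isgn: "sgnpow i (isgn e (x::'a::ab_group_add)) = isgn e (sgnpow i x)"
  by (simp add: sgnpow_def isgn_def)

lemma isgn_sum: "(\<Sum>i\<in>S. isgn e (f i::'a::ab_group_add)) = isgn e (\<Sum>i\<in>S. f i)"
  by (simp add: isgn_def sum_negf)

lemma isgn_parity_cong: "even (e - e') \<Longrightarrow> isgn e x = isgn e' x"
  by (auto simp: isgn_def)

lemma multicomplex_zero_mem:
  assumes "multicomplex n scale A d"
  shows "0 \<in> A p q"
proof -
  have "module scale" "module.subspace scale (A p q)"
    using assms unfolding multicomplex_def by auto
  then show ?thesis by (rule module.subspace_0)
qed

lemma multicomplex_d_zero:
  assumes mc: "multicomplex n scale A d"
  shows "d i p q 0 = 0"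
proof -
  have "\<forall>x\<in>A p q. \<forall>y\<in>A p q. d i p q (x + y) = d i p q x + d i p q y"
    using mc unfolding multicomplex_def by blast
  then have "d i p q (0 + 0) = d i p q 0 + d i p q 0"
    using multicomplex_zero_mem[OF mc] by blast
  then show ?thesis by simp
qed

lemma Cbasis_cases [consumes 2, case_names diag offdiag]:
  assumes "0 < r" and "c \<in> Cbasis r"
  obtains (diag) m where "m < r" "c = (- int m, - int m)"
        | (offdiag) m where "m < r" "c = (- int m - 1, - int m)"
  using assms unfolding Cbasis_def by auto

lemma diag_in_Cbasis: "m < max 1 r \<Longrightarrow> (- int m, - int m) \<in> Cbasis r"
  by (auto simp: Cbasis_def)

lemma Cd_preimage_diag:
  "0 < r \<Longrightarrow> {b \<in> Cbasis r. Cd r i b = Some (- int m, - int m)} = {}"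
  by (auto simp: Cd_def Cbasis_def)

lemma Cd_preimage_offdiag:
  "0 < r \<Longrightarrow> m < r \<Longrightarrow> {b \<in> Cbasis r. Cd r i b = Some (- int m - 1, - int m)} =
     (if i = 1 then {(- int m, - int m)}
      else if i = 0 \<and> m + 1 < r then {(- int m - 1, - int m - 1)} else {})"
  by (auto simp: Cd_def Cbasis_def)

lemma isgn_diag_exponent: "isgn ((- int i) * (- int m) + (1 - int i) * (- int m)) x = isgn (int m) x"
  by (rule isgn_parity_cong) (simp add: algebra_simps)

lemma Td_diag:
  assumes "0 < r" "m < r"
  shows "Td r d i P Q f (- int m, - int m) = isgn (int m) (d i (P + int m) (Q + int m) (f (- int m, - int m)))"
  using assms diag_in_Cbasis[of m r] unfolding Td_def fst_conv snd_conv isgn_diag_exponent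
  by (simp add: Cd_preimage_diag)

lemma Td_offdiag:
  assumes "0 < r" "m < r"
  shows "Td r d i P Q f (- int m - 1, - int m) =
     (if i = 1 then f (- int m, - int m)
      else if i = 0 \<and> m + 1 < r then f (- int m - 1, - int m - 1) else 0)
     + isgn ((- int i) * (- int m - 1) + (1 - int i) * (- int m))
         (d i (P + int m + 1) (Q + int m) (f (- int m - 1, - int m)))"
proof -
  have "(- int m - 1, - int m) \<in> Cbasis r"
    using assms by (auto simp: Cbasis_def)
  moreover have shift: "P - (- int m - 1) = P + int m + 1"
    by simp
  ultimately show ?thesis
    using assms unfolding Td_def fst_conv snd_conv by (simp add: Cd_preimage_offdiag shift)
qed

definition diag_lift :: "'a::zero list \<Rightarrow> nat \<Rightarrow> int \<times> int \<Rightarrow> 'a" where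
  "diag_lift as j = (\<lambda>(u, v). if u = v \<and> u \<le> 0 \<and> nat (- u) \<le> j then as ! (j - nat (- u)) else 0)"

lemma diag_lift_diag [simp]:
  "diag_lift as j (- int m, - int m) = (if m \<le> j then as ! (j - m) else 0)"
  by (simp add: diag_lift_def)

lemma diag_lift_offdiag [simp]: "diag_lift as j (- int m - 1, - int m) = 0"
  by (simp add: diag_lift_def)

lemma diag_lift_diag_Suc [simp]:
  "diag_lift as j (- int m - 1, - int m - 1) = (if m + 1 \<le> j then as ! (j - m - 1) else 0)"
  by (simp add: diag_lift_def nat_add_distrib)

lemma phi_diag_lift: "phi (diag_lift as j) = as ! j"
  by (simp add: phi_def diag_lift_def)

lemma diag_lift_in_TCar:
  assumes zero: "\<And>P Q. 0 \<in> A P Q"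
    and as: "\<And>i. i \<le> j \<Longrightarrow> as ! i \<in> A (p - int i) (q - int i)"
    and j: "j < max 1 r"
  shows "diag_lift as j \<in> TCar r A (p - int j) (q - int j)"
proof -
  have "diag_lift as j (u, v) \<in> A (p - int j - u) (q - int j - v)" for u v
  proof (cases "u = v \<and> u \<le> 0 \<and> nat (- u) \<le> j")
    case True
    then obtain m where "u = - int m" "v = - int m" "m \<le> j"
      by (metis nat_0_le neg_0_le_iff_le minus_minus)
    then show ?thesis using as[of "j - m"] by (simp add: of_nat_diff algebra_simps)
  qed (auto simp: diag_lift_def zero)
  moreover have "diag_lift as j (u, v) = 0" if "(u, v) \<notin> Cbasis r" for u v
  proof (rule ccontr)
    assume "diag_lift as j (u, v) \<noteq> 0"
    then obtain m where "u = - int m" "v = - int m" "m \<le> j"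
      by (auto simp: diag_lift_def split: if_splits) (metis nat_0_le neg_0_le_iff_le minus_minus)
    then show False using that j diag_in_Cbasis[of m r] by simp
  qed
  ultimately show ?thesis by (auto simp: TCar_def)
qed

lemma ZW_equation_shift:
  fixes d :: "nat \<Rightarrow> int \<Rightarrow> int \<Rightarrow> 'a::ab_group_add \<Rightarrow> 'a"
  assumes d0: "\<And>i P Q. d i P Q 0 = 0"
    and eq: "(\<Sum>i\<le>l - m. sgnpow i (d i (p - int (l - m - i)) (q - int (l - m - i)) (as ! (l - m - i)))) = 0"
    and ml: "m \<le> l"
  shows "(\<Sum>i\<le>l. sgnpow i (d i (p - int (l - i) + int m) (q - int (l - i) + int m)
                        (if m \<le> l - i then as ! (l - i - m) else 0))) = 0"
proof -
  have "(\<Sum>i\<le>l. sgnpow i (d i (p - int (l - i) + int m) (q - int (l - i) + int m)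
                        (if m \<le> l - i then as ! (l - i - m) else 0)))
      = (\<Sum>i\<le>l - m. sgnpow i (d i (p - int (l - m - i)) (q - int (l - m - i)) (as ! (l - m - i))))"
  proof (rule sum.mono_neutral_cong_right)
    fix i assume "i \<in> {..l - m}"
    then have "m + i \<le> l" "m \<le> l - i"
      using ml by auto
    then have shift: "l - i - m = l - m - i"
        "p - int (l - i) + int m = p - int (l - m - i)"
        "q - int (l - i) + int m = q - int (l - m - i)"
      by (simp_all add: of_nat_diff)
    show "sgnpow i (d i (p - int (l - i) + int m) (q - int (l - i) + int m)
                 (if m \<le> l - i then as ! (l - i - m) else 0))
             = sgnpow i (d i (p - int (l - m - i)) (q - int (l - m - i)) (as ! (l - m - i)))"
      using \<open>m \<le> l - i\<close> by (simp only: shift if_True)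
  qed (use d0 in auto)
  with eq show ?thesis by simp
qed

lemma diag_lift_witness_diag:
  fixes d :: "nat \<Rightarrow> int \<Rightarrow> int \<Rightarrow> 'a::ab_group_add \<Rightarrow> 'a"
  assumes d0: "\<And>i P Q. d i P Q 0 = 0" and "0 < r" "m < r"
    and eq: "m \<le> l \<Longrightarrow>
      (\<Sum>i\<le>l - m. sgnpow i (d i (p - int (l - m - i)) (q - int (l - m - i)) (as ! (l - m - i)))) = 0"
  shows "(\<Sum>i\<le>l. sgnpow i (Td r d i (p - int (l - i)) (q - int (l - i)) (diag_lift as (l - i))))
           (- int m, - int m) = 0"
proof -
  have "(\<Sum>i\<le>l. sgnpow i (Td r d i (p - int (l - i)) (q - int (l - i)) (diag_lift as (l - i))))
           (- int m, - int m)
      = isgn (int m) (\<Sum>i\<le>l. sgnpow i (d i (p - int (l - i) + int m) (q - int (l - i) + int m)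
                                   (if m \<le> l - i then as ! (l - i - m) else 0)))"
    using assms by (simp add: sum_apply sgnpow_apply Td_diag sgnpow_isgn isgn_sum)
  also have "\<dots> = 0"
  proof (cases "m \<le> l")
    case True
    then show ?thesis using ZW_equation_shift[where d = d, OF d0 eq[OF True]] by simp
  next
    case False
    then have "\<not> m \<le> l - i" for i
      by auto
    then show ?thesis by (simp add: d0)
  qed
  finally show ?thesis .
qed

lemma diag_lift_witness_offdiag:
  fixes d :: "nat \<Rightarrow> int \<Rightarrow> int \<Rightarrow> 'a::ab_group_add \<Rightarrow> 'a"
  assumes d0: "\<And>i P Q. d i P Q 0 = 0" and "0 < r" "m < r" and lr: "l < r"
  shows "(\<Sum>i\<le>l. sgnpow i (Td r d i (p - int (l - i)) (q - int (l - i)) (diag_lift as (l - i))))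
           (- int m - 1, - int m) = 0"
proof -
  define g where "g i = sgnpow i
      (if i = 1 then diag_lift as (l - i) (- int m, - int m)
       else if i = 0 \<and> m + 1 < r then diag_lift as (l - i) (- int m - 1, - int m - 1) else 0)" for i
  have "(\<Sum>i\<le>l. sgnpow i (Td r d i (p - int (l - i)) (q - int (l - i)) (diag_lift as (l - i))))
           (- int m - 1, - int m) = (\<Sum>i\<le>l. g i)"
    using assms unfolding g_def
    by (simp add: sum_apply sgnpow_apply Td_offdiag del: diag_lift_diag diag_lift_diag_Suc)
  also have "\<dots> = 0"
  proof (cases l)
    case 0
    then show ?thesis by (simp add: g_def)
  next
    case (Suc l')
    have "(\<Sum>i\<le>l. g i) = (\<Sum>i\<in>{0, 1}. g i)"
      by (rule sum.mono_neutral_right) (auto simp: Suc g_def)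
    also have "\<dots> = 0"
      using lr by (auto simp: g_def sgnpow_def Suc)
    finally show ?thesis .
  qed
  finally show ?thesis .
qed

lemma diag_lift_in_ZW:
  assumes mc: "multicomplex n scale A d" and as: "as \<in> ZW A d k p q" and "0 < k" "k \<le> r"
  shows "map (diag_lift as) [0..<k] \<in> ZW (TCar r A) (Td r d) k p q"
proof -
  have asA: "\<And>i. i < k \<Longrightarrow> as ! i \<in> A (p - int i) (q - int i)"
    and eq: "\<And>l. l < k \<Longrightarrow>
      (\<Sum>i\<le>l. sgnpow i (d i (p - int (l - i)) (q - int (l - i)) (as ! (l - i)))) = 0"
    using as \<open>0 < k\<close> by (auto simp: ZW_def)
  have d0: "\<And>i P Q. d i P Q 0 = 0"
    using mc by (rule multicomplex_d_zero)
  have r: "0 < r"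
    using assms by simp
  have lift_mem: "diag_lift as j \<in> TCar r A (p - int j) (q - int j)" if "j < k" for j
    using that assms by (intro diag_lift_in_TCar multicomplex_zero_mem[OF mc] asA) auto
  have lift_witness:
    "(\<Sum>i\<le>l. sgnpow i (Td r d i (p - int (l - i)) (q - int (l - i)) (diag_lift as (l - i)))) = 0"
    if "l < k" for l
  proof (rule ext, unfold zero_fun_apply)
    fix c
    show "(\<Sum>i\<le>l. sgnpow i (Td r d i (p - int (l - i)) (q - int (l - i)) (diag_lift as (l - i)))) c
          = 0"
    proof (cases "c \<in> Cbasis r")
      case False
      then show ?thesis by (simp add: sum_apply sgnpow_apply Td_def)
    next
      case True
      with r show ?thesis
      proof (cases rule: Cbasis_cases)
        case (diag m)
        have "l - m < k"
          using that by simp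
        then show ?thesis
          unfolding diag(2) by (intro diag_lift_witness_diag[where d = d, OF d0 r diag(1)]) (blast intro: eq)
      next
        case (offdiag m)
        show ?thesis
          unfolding offdiag(2) using that assms
          by (intro diag_lift_witness_offdiag[where d = d, OF d0 r offdiag(1)]) simp
      qed
    qed
  qed
  show ?thesis
    using lift_mem lift_witness \<open>0 < k\<close> by (simp add: ZW_def)
qed

theorem mainTheorem6:
  fixes scale :: "'r::comm_ring_1 \<Rightarrow> 'a::ab_group_add \<Rightarrow> 'a"
    and A :: "int \<Rightarrow> int \<Rightarrow> 'a set"
    and d :: "nat \<Rightarrow> int \<Rightarrow> int \<Rightarrow> 'a \<Rightarrow> 'a"
    and n :: enat and r k :: nat and p q :: int
  assumes "2 \<le> n"
    and mc: "multicomplex n scale A d"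
    and kr: "k \<le> r"
  shows "ZW A d k p q \<subseteq> map phi ` ZW (TCar r A) (Td r d) k p q"
proof
  fix as assume as: "as \<in> ZW A d k p q"
  show "as \<in> map phi ` ZW (TCar r A) (Td r d) k p q"
  proof (cases "k = 0")
    case True
    then obtain a where a: "as = [a]" "a \<in> A p q"
      using as by (auto simp: ZW_def)
    then have "diag_lift as 0 \<in> TCar r A (p - int 0) (q - int 0)"
      by (intro diag_lift_in_TCar multicomplex_zero_mem[OF mc]) auto
    then have "[diag_lift as 0] \<in> ZW (TCar r A) (Td r d) k p q"
      using True by (simp add: ZW_def)
    moreover have "as = map phi [diag_lift as 0]"
      using a by (simp add: phi_diag_lift)
    ultimately show ?thesis by blast
  next
    case False
    have "as = map phi (map (diag_lift as) [0..<k])"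
      using as False by (intro nth_equalityI) (auto simp: ZW_def phi_diag_lift)
    then show ?thesis
      using diag_lift_in_ZW[OF mc as] False kr by blast
  qed
qed

end
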